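(* Assume the Setting below together with (A-sub), (A-outer), (A-sing). Let $\gamma_1,\dots,\gamma_c\in\mathbb R^d$ be server vectors with fixed vectors $\mathbb E\gamma_z\in\mathcal P^*$ satisfying $\|\mathbb E\gamma_z-\mathbb E\mu\|_2\le\delta_s$ for all $z$. Let $\hat{\mathcal P}$ be any affine subspace of $\mathbb R^d$ and $\Delta\Gamma=[\Pi_{\hat{\mathcal P}}(\gamma_1)-\mathbb E\gamma_1,\dots,\Pi_{\hat{\mathcal P}}(\gamma_c)-\mathbb E\gamma_c]\in\mathbb R^{d\times c}$. Then, with $\|\cdot\|_2$ the spectral norm, $$\|\Delta\Gamma\|_2^2\le2\sum_{z=1}^c\|\gamma_z-\mathbb E\gamma_z\|_2^2+4c\Big(\frac1{n-2f}+\frac{(\delta+\delta_s)^2}{\sigma^2}\Big)\Big(\ell_t(\hat{\mathcal P})+\sum_{i\in\mathcal H}\|g_i-\mathbb Eg_i\|_2^2\Big).$$ Consequently, if $\mathbb E\|g_i-\mathbb Eg_i\|_2^2\le\epsilon^2$ ($i\in\mathcal H$) and $\mathbb E\|\gamma_z-\mathbb E\gamma_z\|_2^2\le\epsilon_s^2$ for all $z$, then $\mathbb E\|\Delta\Gamma\|_2^2\le2c\epsilon_s^2+4c\big(\frac1{n-2f}+\frac{(\delta+\delta_s)^2}{\sigma^2}\big)\big(\mathbb E\ell_t(\hat{\mathcal P})+|\mathcal H|\epsilon^2\big)$.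
   Context: Setting: let $n,f,c,d$ be positive integers with $c\ge2$, $d\ge c$, $n-2f\ge1$. The index set $\{1,\dots,n\}$ is partitioned as $\mathcal H\sqcup\mathcal B$ (honest and Byzantine clients) with $|\mathcal B|\le f$. Each client $i$ has a vector $g_i\in\mathbb R^d$; for $i\in\mathcal H$, $\mathbb Eg_i\in\mathbb R^d$ denotes a fixed vector (the expectation of $g_i$), and $\mathbb E\mu=\frac1{|\mathcal H|}\sum_{i\in\mathcal H}\mathbb Eg_i$. A $k$-dimensional affine subspace is $\mathcal P=\{U\lambda+m:\lambda\in\mathbb R^k\}$ with $U\in\mathbb R^{d\times k}$ having orthonormal columns and $m\in\mathbb R^d$; its orthogonal projection is $\Pi_{\mathcal P}(w)=UU^\top(w-m)+m$. The trimmed reconstruction loss of an affine subspace $\mathcal P$ is $\ell_t(\mathcal P)=\min_{S\subseteq\{1,\dots,n\},\,|S|=n-f}\sum_{i\in S}\|g_i-\Pi_{\mathcal P}(g_i)\|_2^2$. Assumptions: (A-sub) there is a $(c-1)$-dimensional affine subspace $\mathcal P^*$ containing $\mathbb Eg_i$ for all $i\in\mathcal H$; (A-outer) $\|\mathbb Eg_i-\mathbb E\mu\|_2\le\delta$ for all $i\in\mathcal H$; (A-sing) for every $S\subseteq\mathcal H$ with $|S|=n-2f$, the $d\times(n-2f)$ matrix with columns $\mathbb Eg_s-\frac1{n-2f}\sum_{s'\in S}\mathbb Eg_{s'}$ ($s\in S$) has $(c-1)$-th largest singular value at least $\sigma>0$. *)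

theory Defs
  imports "HOL-Probability.Probability"
begin

text \<open>A k-dimensional affine subspace P = {U lambda + m}. The d x k matrix U is
  represented by its columns U 0, ..., U (k-1) (vectors in real^'d).\<close>

definition orthonormal_cols :: "nat \<Rightarrow> (nat \<Rightarrow> real^'d) \<Rightarrow> bool" where
  "orthonormal_cols k U \<longleftrightarrow> (\<forall>j<k. \<forall>l<k. U j \<bullet> U l = (if j = l then 1 else 0))"

definition aff_sub :: "nat \<Rightarrow> (nat \<Rightarrow> real^'d) \<Rightarrow> real^'d \<Rightarrow> (real^'d) set" where
  "aff_sub k U m = {(\<Sum>j<k. lam j *\<^sub>R U j) + m | lam. True}"

definition aff_proj :: "nat \<Rightarrow> (nat \<Rightarrow> real^'d) \<Rightarrow> real^'d \<Rightarrow> real^'d \<Rightarrow> real^'d" where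
  "aff_proj k U m w = (\<Sum>j<k. (U j \<bullet> (w - m)) *\<^sub>R U j) + m"

definition trimmed_loss ::
  "nat \<Rightarrow> nat \<Rightarrow> (nat \<Rightarrow> real^'d) \<Rightarrow> nat \<Rightarrow> (nat \<Rightarrow> real^'d) \<Rightarrow> real^'d \<Rightarrow> real" where
  "trimmed_loss n f g k U m =
     Min {(\<Sum>i\<in>S. (norm (g i - aff_proj k U m (g i)))\<^sup>2) | S. S \<subseteq> {1..n} \<and> card S = n - f}"

definition spec_norm :: "'i set \<Rightarrow> ('i \<Rightarrow> real^'d) \<Rightarrow> real" where
  "spec_norm I A = Sup {norm (\<Sum>i\<in>I. x i *\<^sub>R A i) | x. (\<Sum>i\<in>I. (x i)\<^sup>2) \<le> 1}"

definition is_svd :: "'i set \<Rightarrow> ('i \<Rightarrow> real^'d) \<Rightarrow> (nat \<Rightarrow> real) \<Rightarrow> bool" where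
  "is_svd I A s \<longleftrightarrow>
     (let r = min CARD('d) (card I) in
      (\<exists>(u :: nat \<Rightarrow> real^'d) (v :: nat \<Rightarrow> 'i \<Rightarrow> real).
          (\<forall>j<r. \<forall>l<r. u j \<bullet> u l = (if j = l then 1 else 0)) \<and>
          (\<forall>j<r. \<forall>l<r. (\<Sum>i\<in>I. v j i * v l i) = (if j = l then 1 else 0)) \<and>
          (\<forall>i\<in>I. A i = (\<Sum>j<r. (s j * v j i) *\<^sub>R u j))) \<and>
      (\<forall>j<r. 0 \<le> s j) \<and>
      (\<forall>j l. j \<le> l \<longrightarrow> l < r \<longrightarrow> s l \<le> s j) \<and>
      (\<forall>j\<ge>r. s j = 0))"

text \<open>The k-th largest singular value (k >= 1); 0 if k exceeds min(d,|I|).\<close>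
definition sing_val :: "nat \<Rightarrow> 'i set \<Rightarrow> ('i \<Rightarrow> real^'d) \<Rightarrow> real" where
  "sing_val k I A = (SOME s. is_svd I A s) (k - 1)"

end

(*
  Column by column, the projected server vector splits as
  Pi(gamma_z) - E gamma_z = Pi_lin(gamma_z - E gamma_z) - (E gamma_z - Pi(E gamma_z)),
  and the spectral norm is at most the Frobenius norm.  The set of n - f clients
  attaining the trimmed loss contains a set T of n - 2f honest ones.  By (A-sing) the
  centred expectations E g_i (i in T) span the direction space of P*, so E gamma_z is
  an affine combination of them whose weights have squared length at most
  1/(n - 2f) + (delta + delta_s)^2 / sigma^2.  By Cauchy-Schwarz the residual of
  E gamma_z is then controlled by the residuals of the E g_i, each of which is at most
  twice the residual of g_i plus twice |g_i - E g_i|^2.  The bound in expectation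
  follows by integrating the pointwise bound.

  Singular values are defined by choice, so the existence of a singular value
  decomposition is proved first: the eigenvectors of A A^T are found by successive
  maximisation of |A^T y|^2 over unit spheres, and normalising A^T u_j gives the
  right singular vectors.
*)
theory Submission
  imports Defs
begin

lemma linear_le_quadratic_imp_zero:
  fixes b C :: real
  assumes "\<And>t. 2 * t * b \<le> t\<^sup>2 * C"
  shows "b = 0"
proof (rule ccontr)
  assume "b \<noteq> 0"
  define D where "D = \<bar>C\<bar> + 1"
  have "D > 0" "2 * D - C > 0" unfolding D_def by (simp_all add: abs_if)
  define t where "t = b / D"
  have "2 * t * b - t\<^sup>2 * C = t\<^sup>2 * (2 * D - C)"
    unfolding t_def using \<open>D > 0\<close> by (simp add: field_simps power2_eq_square)
  moreover have "t\<^sup>2 > 0" using \<open>b \<noteq> 0\<close> \<open>D > 0\<close> unfolding t_def by simp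
  ultimately have "2 * t * b - t\<^sup>2 * C > 0" using \<open>2 * D - C > 0\<close> by simp
  with assms[of t] show False by linarith
qed

lemma norm_diff_sq_le:
  fixes a b :: "'a::real_normed_vector"
  shows "(norm (a - b))\<^sup>2 \<le> 2 * (norm a)\<^sup>2 + 2 * (norm b)\<^sup>2"
proof -
  have "(norm (a - b))\<^sup>2 \<le> (norm a + norm b)\<^sup>2"
    using norm_triangle_ineq4[of a b] by (intro power_mono) auto
  also have "\<dots> \<le> 2 * (norm a)\<^sup>2 + 2 * (norm b)\<^sup>2"
    using sum_squares_bound[of "norm a" "norm b"] by (simp add: power2_sum)
  finally show ?thesis .
qed

lemma norm_mean_sub_le:
  fixes e :: "'i \<Rightarrow> 'a::real_normed_vector"
  assumes "finite T" "T \<noteq> {}" "\<forall>i\<in>T. norm (e i - c) \<le> \<delta>"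
  shows "norm ((1 / real (card T)) *\<^sub>R (\<Sum>i\<in>T. e i) - c) \<le> \<delta>"
proof -
  have "(1 / real (card T)) *\<^sub>R (\<Sum>i\<in>T. e i) - c = (1 / real (card T)) *\<^sub>R (\<Sum>i\<in>T. e i - c)"
    using assms(1,2) by (simp add: sum_subtractf scaleR_diff_right sum_constant_scaleR)
  also have "norm \<dots> \<le> (1 / real (card T)) * (\<Sum>i\<in>T. norm (e i - c))"
    using norm_sum[of "\<lambda>i. e i - c" T] by (simp add: divide_right_mono)
  also have "\<dots> \<le> (1 / real (card T)) * (real (card T) * \<delta>)"
    using sum_bounded_above[of T "\<lambda>i. norm (e i - c)" \<delta>] assms(3)
    by (intro mult_left_mono) auto
  also have "\<dots> = \<delta>" using assms(1,2) by simp
  finally show ?thesis .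
qed

lemma norm_sum_scaleR_sq_le:
  fixes w :: "'i \<Rightarrow> 'a::real_normed_vector"
  shows "(norm (\<Sum>i\<in>T. a i *\<^sub>R w i))\<^sup>2 \<le> (\<Sum>i\<in>T. (a i)\<^sup>2) * (\<Sum>i\<in>T. (norm (w i))\<^sup>2)"
proof -
  have "norm (\<Sum>i\<in>T. a i *\<^sub>R w i) \<le> (\<Sum>i\<in>T. \<bar>a i\<bar> * norm (w i))"
    using norm_sum[of "\<lambda>i. a i *\<^sub>R w i" T] by simp
  then have "(norm (\<Sum>i\<in>T. a i *\<^sub>R w i))\<^sup>2 \<le> (\<Sum>i\<in>T. \<bar>a i\<bar> * norm (w i))\<^sup>2"
    by (intro power_mono) auto
  also have "\<dots> \<le> (\<Sum>i\<in>T. \<bar>a i\<bar>\<^sup>2) * (\<Sum>i\<in>T. (norm (w i))\<^sup>2)"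
    by (rule Cauchy_Schwarz_ineq_sum)
  finally show ?thesis by simp
qed

lemma spec_norm_sq_le_sum_norm_sq:
  fixes A :: "'i \<Rightarrow> real^'d"
  assumes "finite J"
  shows "(spec_norm J A)\<^sup>2 \<le> (\<Sum>z\<in>J. (norm (A z))\<^sup>2)"
proof -
  define F where "F = (\<Sum>z\<in>J. (norm (A z))\<^sup>2)"
  define X where "X = {norm (\<Sum>i\<in>J. x i *\<^sub>R A i) | x. (\<Sum>i\<in>J. (x i)\<^sup>2) \<le> 1}"
  have "F \<ge> 0" unfolding F_def by (simp add: sum_nonneg)
  have bound: "t \<le> sqrt F" if "t \<in> X" for t
  proof -
    obtain x where t: "t = norm (\<Sum>i\<in>J. x i *\<^sub>R A i)" and x: "(\<Sum>i\<in>J. (x i)\<^sup>2) \<le> 1"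
      using \<open>t \<in> X\<close> unfolding X_def by blast
    have "t\<^sup>2 \<le> (\<Sum>i\<in>J. (x i)\<^sup>2) * F"
      unfolding t F_def by (rule norm_sum_scaleR_sq_le)
    also have "\<dots> \<le> F" using mult_right_mono[OF x \<open>F \<ge> 0\<close>] by simp
    finally show ?thesis by (simp add: real_le_rsqrt)
  qed
  have "0 \<in> X" unfolding X_def by (auto intro!: exI[of _ "\<lambda>_. 0"])
  moreover have "bdd_above X" using bound by (rule bdd_aboveI)
  ultimately have "0 \<le> Sup X" "Sup X \<le> sqrt F"
    using bound by (auto intro: cSup_upper2[of 0] cSup_least)
  then have "(Sup X)\<^sup>2 \<le> F"
    using \<open>F \<ge> 0\<close> by (metis power_mono real_sqrt_pow2)
  then show ?thesis unfolding spec_norm_def X_def[symmetric] F_def .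
qed

section \<open>Orthonormal families\<close>

definition set_inner :: "'i set \<Rightarrow> ('i \<Rightarrow> real) \<Rightarrow> ('i \<Rightarrow> real) \<Rightarrow> real" where
  "set_inner I x y = (\<Sum>i\<in>I. x i * y i)"

definition orthonormal_family :: "'i set \<Rightarrow> nat \<Rightarrow> (nat \<Rightarrow> 'i \<Rightarrow> real) \<Rightarrow> bool" where
  "orthonormal_family I p v \<longleftrightarrow>
     (\<forall>j<p. \<forall>l<p. set_inner I (v j) (v l) = (if j = l then 1 else 0))"

lemma set_inner_commute: "set_inner I x y = set_inner I y x"
  unfolding set_inner_def by (simp add: mult.commute)

lemma set_inner_self_nonneg: "set_inner I x x \<ge> 0"
  unfolding set_inner_def by (simp add: sum_nonneg)

lemma set_inner_diff_right: "set_inner I x (\<lambda>i. a i - b i) = set_inner I x a - set_inner I x b"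
  unfolding set_inner_def by (simp add: right_diff_distrib sum_subtractf)

lemma set_inner_sum_right:
  "set_inner I x (\<lambda>i. \<Sum>j\<in>J. c j * v j i) = (\<Sum>j\<in>J. c j * set_inner I x (v j))"
  unfolding set_inner_def sum_distrib_left
  by (subst sum.swap) (simp add: mult.left_commute)

lemma set_inner_indicator_right:
  "finite I \<Longrightarrow> i0 \<in> I \<Longrightarrow> set_inner I x (\<lambda>i. if i = i0 then 1 else 0) = x i0"
  unfolding set_inner_def by (simp add: if_distrib cong: if_cong)

lemma set_inner_orthonormal_comb:
  assumes "orthonormal_family I p v" "l < p"
  shows "set_inner I (v l) (\<lambda>i. \<Sum>j<p. c j * v j i) = c l"
proof -
  have "set_inner I (v l) (\<lambda>i. \<Sum>j<p. c j * v j i) = (\<Sum>j<p. c j * (if l = j then 1 else 0))"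
    unfolding set_inner_sum_right using assms unfolding orthonormal_family_def
    by (intro sum.cong) auto
  also have "\<dots> = c l" using assms(2) by (simp add: if_distrib cong: if_cong)
  finally show ?thesis .
qed

text \<open>The residuals of the unit vectors after projecting out an orthonormal family
  have total squared length equal to the trace of the complementary projection.\<close>
lemma orthonormal_family_residuals:
  assumes fin: "finite I" and on: "orthonormal_family I p v"
  obtains W where "\<And>l i0. l < p \<Longrightarrow> i0 \<in> I \<Longrightarrow> set_inner I (v l) (W i0) = 0"
    and "(\<Sum>i0\<in>I. set_inner I (W i0) (W i0)) = real (card I) - real p"
proof
  define W where "W i0 = (\<lambda>i. (if i = i0 then 1 else 0) - (\<Sum>j<p. v j i0 * v j i))" for i0
  show orth: "set_inner I (v l) (W i0) = 0" if "l < p" "i0 \<in> I" for l i0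
    unfolding W_def set_inner_diff_right set_inner_orthonormal_comb[OF on \<open>l < p\<close>]
      set_inner_indicator_right[OF fin \<open>i0 \<in> I\<close>] by simp
  have "set_inner I (W i0) (W i0) = 1 - (\<Sum>j<p. (v j i0)\<^sup>2)" if "i0 \<in> I" for i0
  proof -
    have "set_inner I (W i0) (W i0) = W i0 i0 - (\<Sum>j<p. v j i0 * set_inner I (W i0) (v j))"
      by (subst (2) W_def)
        (simp only: set_inner_diff_right set_inner_sum_right set_inner_indicator_right[OF fin that])
    also have "(\<Sum>j<p. v j i0 * set_inner I (W i0) (v j)) = 0"
      using orth that by (simp add: set_inner_commute)
    finally show ?thesis by (simp add: W_def power2_eq_square)
  qed
  then have "(\<Sum>i0\<in>I. set_inner I (W i0) (W i0)) = real (card I) - (\<Sum>j<p. \<Sum>i0\<in>I. (v j i0)\<^sup>2)"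
    by (simp add: sum_subtractf sum.swap[of _ I])
  also have "(\<Sum>j<p. \<Sum>i0\<in>I. (v j i0)\<^sup>2) = real p"
    using on unfolding orthonormal_family_def set_inner_def by (simp add: power2_eq_square)
  finally show "(\<Sum>i0\<in>I. set_inner I (W i0) (W i0)) = real (card I) - real p" .
qed

lemma orthonormal_family_card_le:
  assumes "finite I" "orthonormal_family I p v"
  shows "p \<le> card I"
proof -
  obtain W where "(\<Sum>i0\<in>I. set_inner I (W i0) (W i0)) = real (card I) - real p"
    using orthonormal_family_residuals[OF assms] by metis
  moreover have "0 \<le> (\<Sum>i0\<in>I. set_inner I (W i0) (W i0))"
    by (simp add: sum_nonneg set_inner_self_nonneg)
  ultimately show ?thesis by linarith
qed

lemma orthonormal_family_extend:
  assumes fin: "finite I" and on: "orthonormal_family I p v" and "p < card I"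
  obtains w where "orthonormal_family I (Suc p) (v(p := w))"
proof -
  obtain W where orth: "\<And>l i0. l < p \<Longrightarrow> i0 \<in> I \<Longrightarrow> set_inner I (v l) (W i0) = 0"
    and tot: "(\<Sum>i0\<in>I. set_inner I (W i0) (W i0)) = real (card I) - real p"
    using orthonormal_family_residuals[OF fin on] by metis
  have "0 < (\<Sum>i0\<in>I. set_inner I (W i0) (W i0))" using tot \<open>p < card I\<close> by simp
  then obtain i0 where i0: "i0 \<in> I" "set_inner I (W i0) (W i0) > 0"
    using sum_nonpos[of I "\<lambda>i0. set_inner I (W i0) (W i0)"] by (meson not_le)
  define w where "w i = W i0 i / sqrt (set_inner I (W i0) (W i0))" for i
  have w1: "set_inner I w w = 1"
    using i0(2) unfolding w_def set_inner_def
    by (simp add: sum_divide_distrib[symmetric] real_sqrt_mult[symmetric])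
  have w0: "set_inner I (v j) w = 0" if "j < p" for j
    using orth[OF that i0(1)] unfolding w_def set_inner_def
    by (simp add: sum_divide_distrib[symmetric])
  have "orthonormal_family I (Suc p) (v(p := w))"
    unfolding orthonormal_family_def
  proof (intro allI impI)
    fix j l assume "j < Suc p" "l < Suc p"
    then consider "j < p" "l < p" | "j = p" "l < p" | "j < p" "l = p" | "j = p" "l = p"
      by linarith
    then show "set_inner I ((v(p := w)) j) ((v(p := w)) l) = (if j = l then 1 else 0)"
      using on w0 w1 by cases (auto simp: orthonormal_family_def set_inner_commute)
  qed
  then show thesis ..
qed

lemma orthonormal_family_extend_to:
  assumes fin: "finite I" and on: "orthonormal_family I p v" and "p \<le> q" "q \<le> card I"
  shows "\<exists>v'. orthonormal_family I q v' \<and> (\<forall>j<p. v' j = v j)"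
  using assms(3,4)
proof (induction q rule: dec_induct)
  case base
  show ?case using on by blast
next
  case (step q)
  then obtain v' where on': "orthonormal_family I q v'" and agree: "\<forall>j<p. v' j = v j"
    by auto
  obtain w where "orthonormal_family I (Suc q) (v'(q := w))"
    using orthonormal_family_extend[OF fin on'] step by auto
  moreover have "\<forall>j<p. (v'(q := w)) j = v j" using agree step by auto
  ultimately show ?case by blast
qed

lemma sum_sq_orthonormal_comb:
  assumes "orthonormal_family T k v"
  shows "(\<Sum>i\<in>T. (\<Sum>j<k. c j * v j i)\<^sup>2) = (\<Sum>j<k. (c j)\<^sup>2)"
proof -
  have "(\<Sum>i\<in>T. (\<Sum>j<k. c j * v j i)\<^sup>2) = set_inner T (\<lambda>i. \<Sum>j<k. c j * v j i) (\<lambda>i. \<Sum>j<k. c j * v j i)"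
    unfolding set_inner_def by (simp add: power2_eq_square)
  also have "\<dots> = (\<Sum>j<k. c j * set_inner T (v j) (\<lambda>i. \<Sum>l<k. c l * v l i))"
    by (subst set_inner_commute) (simp add: set_inner_sum_right set_inner_commute)
  also have "\<dots> = (\<Sum>j<k. (c j)\<^sup>2)"
    by (simp add: set_inner_orthonormal_comb[OF assms] power2_eq_square)
  finally show ?thesis .
qed

lemma set_inner_vec: "set_inner UNIV (\<lambda>i. x $ i) (\<lambda>i. y $ i) = x \<bullet> (y :: real^'d)"
  unfolding set_inner_def inner_vec_def by simp

lemma orthonormal_cols_iff_family:
  "orthonormal_cols k u \<longleftrightarrow> orthonormal_family UNIV k (\<lambda>j i. u j $ i)"
  unfolding orthonormal_cols_def orthonormal_family_def set_inner_vec ..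

lemma orthonormal_cols_le_CARD:
  fixes u :: "nat \<Rightarrow> real^'d"
  shows "orthonormal_cols k u \<Longrightarrow> k \<le> CARD('d)"
  using orthonormal_family_card_le[of "UNIV :: 'd set" k] by (simp add: orthonormal_cols_iff_family)

lemma orthonormal_cols_extend:
  fixes u :: "nat \<Rightarrow> real^'d"
  assumes "orthonormal_cols k u" "k < CARD('d)"
  obtains y where "orthonormal_cols (Suc k) (u(k := y))"
proof -
  obtain w where "orthonormal_family UNIV (Suc k) ((\<lambda>j i. u j $ i)(k := w))"
    using orthonormal_family_extend[of "UNIV :: 'd set" k] assms
    by (auto simp: orthonormal_cols_iff_family)
  then have "orthonormal_cols (Suc k) (u(k := \<chi> i. w i))"
    unfolding orthonormal_cols_iff_family
    by (simp add: fun_upd_def if_distrib vec_lambda_inverse cong: if_cong)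
  then show thesis ..
qed

lemma orthonormal_cols_mono: "orthonormal_cols r u \<Longrightarrow> k \<le> r \<Longrightarrow> orthonormal_cols k u"
  unfolding orthonormal_cols_def by auto

lemma orthonormal_cols_extend_normalized:
  fixes u :: "nat \<Rightarrow> real^'d"
  assumes "orthonormal_cols k u" "\<forall>j<k. u j \<bullet> y = 0" "y \<noteq> 0"
  shows "orthonormal_cols (Suc k) (u(k := (1 / norm y) *\<^sub>R y))"
  using assms unfolding orthonormal_cols_def
  by (auto simp: less_Suc_eq inner_commute dot_square_norm power2_eq_square)

lemma orthonormal_cols_inner_comb:
  fixes u :: "nat \<Rightarrow> real^'d"
  assumes "orthonormal_cols k u" "l < k"
  shows "u l \<bullet> (\<Sum>j<k. a j *\<^sub>R u j) = a l"
proof -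
  have "u l \<bullet> (\<Sum>j<k. a j *\<^sub>R u j) = (\<Sum>j<k. a j * (if l = j then 1 else 0))"
    unfolding inner_sum_right using assms unfolding orthonormal_cols_def by (intro sum.cong) auto
  also have "\<dots> = a l" using assms(2) by (simp add: if_distrib cong: if_cong)
  finally show ?thesis .
qed

lemma orthonormal_cols_inner_combs:
  fixes u :: "nat \<Rightarrow> real^'d"
  assumes "orthonormal_cols k u"
  shows "(\<Sum>j<k. a j *\<^sub>R u j) \<bullet> (\<Sum>j<k. b j *\<^sub>R u j) = (\<Sum>j<k. a j * b j)"
  unfolding inner_sum_left by (simp add: orthonormal_cols_inner_comb[OF assms])

section \<open>Projections onto column spans\<close>

text \<open>For orthonormal U, col_proj k U is the orthogonal projection onto the span of
  U 0, ..., U (k - 1); membership in that span is expressed as col_proj k U y = y.\<close>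
definition col_proj :: "nat \<Rightarrow> (nat \<Rightarrow> real^'d) \<Rightarrow> real^'d \<Rightarrow> real^'d" where
  "col_proj k U v = (\<Sum>j<k. (U j \<bullet> v) *\<^sub>R U j)"

lemma linear_col_proj: "linear (col_proj k U)"
  by (rule linearI)
    (simp_all add: col_proj_def inner_add_right scaleR_add_left sum.distrib scaleR_sum_right)

lemma aff_proj_eq_col_proj: "aff_proj k U m w = col_proj k U (w - m) + m"
  unfolding aff_proj_def col_proj_def ..

lemma col_proj_comb:
  "orthonormal_cols k U \<Longrightarrow> col_proj k U (\<Sum>j<k. a j *\<^sub>R U j) = (\<Sum>j<k. a j *\<^sub>R U j)"
  unfolding col_proj_def by (simp add: orthonormal_cols_inner_comb)

lemma subspace_col_proj_fixed: "subspace {y. col_proj k U y = y}"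
proof -
  have "linear (\<lambda>y. col_proj k U y - y)"
    using linear_col_proj by (intro linear_compose_sub linear_ident)
  then show ?thesis using linear_subspace_kernel by fastforce
qed

lemma norm_col_proj_sq:
  "orthonormal_cols k U \<Longrightarrow> (norm (col_proj k U v))\<^sup>2 = (\<Sum>j<k. (U j \<bullet> v)\<^sup>2)"
  unfolding col_proj_def dot_square_norm[symmetric]
  by (simp add: orthonormal_cols_inner_combs power2_eq_square)

lemma norm_sub_col_proj_sq:
  assumes "orthonormal_cols k U"
  shows "(norm (v - col_proj k U v))\<^sup>2 = (norm v)\<^sup>2 - (\<Sum>j<k. (U j \<bullet> v)\<^sup>2)"
proof -
  have "v \<bullet> col_proj k U v = (\<Sum>j<k. (U j \<bullet> v)\<^sup>2)"
    unfolding col_proj_def by (simp add: inner_sum_right power2_eq_square inner_commute)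
  then show ?thesis
    using norm_col_proj_sq[OF assms, of v]
    by (simp add: power2_norm_eq_inner inner_diff_left inner_diff_right inner_commute)
qed

lemma norm_col_proj_le: "orthonormal_cols k U \<Longrightarrow> norm (col_proj k U v) \<le> norm v"
  using norm_col_proj_sq[of k U v] norm_sub_col_proj_sq[of k U v]
  by (smt (verit) power2_le_imp_le norm_ge_zero zero_le_power2)

lemma norm_sub_col_proj_le: "orthonormal_cols k U \<Longrightarrow> norm (v - col_proj k U v) \<le> norm v"
  using norm_sub_col_proj_sq[of k U v]
  by (smt (verit) power2_le_imp_le norm_ge_zero sum_nonneg zero_le_power2)

lemma orthonormal_cols_complete:
  fixes u :: "nat \<Rightarrow> real^'d"
  assumes u: "orthonormal_cols CARD('d) u"
  shows "col_proj CARD('d) u x = x"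
proof (rule ccontr)
  define y where "y = x - col_proj CARD('d) u x"
  assume "col_proj CARD('d) u x \<noteq> x"
  then have "y \<noteq> 0" unfolding y_def by simp
  moreover have "\<forall>j<CARD('d). u j \<bullet> y = 0"
    unfolding y_def col_proj_def inner_diff_right by (simp add: orthonormal_cols_inner_comb[OF u])
  ultimately have "orthonormal_cols (Suc CARD('d)) (u(CARD('d) := (1 / norm y) *\<^sub>R y))"
    by (intro orthonormal_cols_extend_normalized[OF u])
  from orthonormal_cols_le_CARD[OF this] show False by simp
qed

lemma orthonormal_cols_in_col_span_le:
  fixes u :: "nat \<Rightarrow> real^'d"
  assumes U: "orthonormal_cols k U" and u: "orthonormal_cols p u"
    and span: "\<forall>j<p. col_proj k U (u j) = u j"
  shows "p \<le> k"
proof -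
  have "u j \<bullet> u l = set_inner {..<k} (\<lambda>i. U i \<bullet> u j) (\<lambda>i. U i \<bullet> u l)" if "j < p" "l < p" for j l
  proof -
    have "u j \<bullet> u l = col_proj k U (u j) \<bullet> col_proj k U (u l)" using span that by simp
    also have "\<dots> = set_inner {..<k} (\<lambda>i. U i \<bullet> u j) (\<lambda>i. U i \<bullet> u l)"
      unfolding col_proj_def set_inner_def by (rule orthonormal_cols_inner_combs[OF U])
    finally show ?thesis .
  qed
  then have "orthonormal_family {..<k} p (\<lambda>j i. U i \<bullet> u j)"
    using u unfolding orthonormal_cols_def orthonormal_family_def by simp
  from orthonormal_family_card_le[OF _ this] show ?thesis by simp
qed

lemma orthonormal_cols_col_span_eq:
  fixes u :: "nat \<Rightarrow> real^'d"
  assumes U: "orthonormal_cols k U" and u: "orthonormal_cols k u"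
    and span: "\<forall>j<k. col_proj k U (u j) = u j" and x: "col_proj k U x = x"
  shows "col_proj k u x = x"
proof (rule ccontr)
  define y where "y = x - col_proj k u x"
  define u' where "u' = u(k := (1 / norm y) *\<^sub>R y)"
  have S: "subspace {y. col_proj k U y = y}" by (rule subspace_col_proj_fixed)
  assume "col_proj k u x \<noteq> x"
  then have "y \<noteq> 0" unfolding y_def by simp
  moreover have "\<forall>j<k. u j \<bullet> y = 0"
    unfolding y_def col_proj_def inner_diff_right by (simp add: orthonormal_cols_inner_comb[OF u])
  ultimately have u': "orthonormal_cols (Suc k) u'"
    unfolding u'_def by (rule orthonormal_cols_extend_normalized[OF u, rotated])
  have "col_proj k u x \<in> {y. col_proj k U y = y}"
    unfolding col_proj_def[of k u] using span
    by (intro subspace_sum[OF S] subspace_scale[OF S]) auto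
  then have "y \<in> {y. col_proj k U y = y}"
    unfolding y_def using subspace_diff[OF S] x by blast
  then have "\<forall>j<Suc k. col_proj k U (u' j) = u' j"
    unfolding u'_def using span subspace_scale[OF S] by (auto simp: less_Suc_eq)
  from orthonormal_cols_in_col_span_le[OF U u' this] show False by simp
qed

lemma aff_sub_iff_col_proj:
  assumes "orthonormal_cols k U"
  shows "y \<in> aff_sub k U m \<longleftrightarrow> col_proj k U (y - m) = y - m"
proof
  assume "y \<in> aff_sub k U m"
  then show "col_proj k U (y - m) = y - m"
    unfolding aff_sub_def by (auto simp: col_proj_comb[OF assms])
next
  assume "col_proj k U (y - m) = y - m"
  then have "y = (\<Sum>j<k. (U j \<bullet> (y - m)) *\<^sub>R U j) + m" unfolding col_proj_def by simp
  then show "y \<in> aff_sub k U m"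
    unfolding aff_sub_def by (intro CollectI exI[of _ "\<lambda>j. U j \<bullet> (y - m)"]) simp
qed

lemma aff_sub_diff_col_proj:
  assumes "orthonormal_cols k U" "y \<in> aff_sub k U m" "z \<in> aff_sub k U m"
  shows "col_proj k U (y - z) = y - z"
proof -
  have "y - m \<in> {v. col_proj k U v = v}" "z - m \<in> {v. col_proj k U v = v}"
    using assms(2,3) unfolding aff_sub_iff_col_proj[OF assms(1)] by simp_all
  from subspace_diff[OF subspace_col_proj_fixed this] show ?thesis by simp
qed

lemma mean_in_aff_sub:
  assumes U: "orthonormal_cols k U" and T: "finite T" "T \<noteq> {}"
    and e: "\<forall>i\<in>T. e i \<in> aff_sub k U m"
  shows "(1 / real (card T)) *\<^sub>R (\<Sum>i\<in>T. e i) \<in> aff_sub k U m"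
proof -
  have "(1 / real (card T)) *\<^sub>R (\<Sum>i\<in>T. e i) - m = (1 / real (card T)) *\<^sub>R (\<Sum>i\<in>T. e i - m)"
    using T by (simp add: sum_subtractf scaleR_diff_right sum_constant_scaleR del: sum_constant)
  also have "\<dots> \<in> {v. col_proj k U v = v}"
    using e aff_sub_iff_col_proj[OF U]
    by (intro subspace_scale[OF subspace_col_proj_fixed] subspace_sum[OF subspace_col_proj_fixed])
      auto
  finally show ?thesis unfolding aff_sub_iff_col_proj[OF U] by simp
qed

lemma aff_proj_residual: "w - aff_proj k U m w = (w - m) - col_proj k U (w - m)"
  unfolding aff_proj_eq_col_proj by simp

lemma aff_residual_affine_comb:
  assumes "(\<Sum>i\<in>T. a i) = 1"
  shows "(\<Sum>i\<in>T. a i *\<^sub>R e i) - aff_proj k U m (\<Sum>i\<in>T. a i *\<^sub>R e i)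
    = (\<Sum>i\<in>T. a i *\<^sub>R (e i - aff_proj k U m (e i)))"
proof -
  have lin: "linear (\<lambda>v. v - col_proj k U v)"
    using linear_col_proj by (intro linear_compose_sub linear_ident)
  have "(\<Sum>i\<in>T. a i *\<^sub>R e i) - m = (\<Sum>i\<in>T. a i *\<^sub>R (e i - m))"
    using assms by (simp add: scaleR_diff_right sum_subtractf scaleR_sum_left[symmetric])
  then show ?thesis
    unfolding aff_proj_residual
    using linear_sum[OF lin, of "\<lambda>i. a i *\<^sub>R (e i - m)" T]
    by (simp add: o_def linear_scale[OF lin])
qed

lemma aff_residual_sq_le:
  assumes "orthonormal_cols k U"
  shows "(norm (b - aff_proj k U m b))\<^sup>2
    \<le> 2 * (norm (a - aff_proj k U m a))\<^sup>2 + 2 * (norm (a - b))\<^sup>2"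
proof -
  have "b - aff_proj k U m b = (a - aff_proj k U m a) - ((a - b) - col_proj k U (a - b))"
    unfolding aff_proj_residual linear_diff[OF linear_col_proj] by (simp add: algebra_simps)
  then have "(norm (b - aff_proj k U m b))\<^sup>2
      \<le> 2 * (norm (a - aff_proj k U m a))\<^sup>2 + 2 * (norm ((a - b) - col_proj k U (a - b)))\<^sup>2"
    using norm_diff_sq_le by metis
  moreover have "(norm ((a - b) - col_proj k U (a - b)))\<^sup>2 \<le> (norm (a - b))\<^sup>2"
    using norm_sub_col_proj_le[OF assms] by (intro power_mono) auto
  ultimately show ?thesis by linarith
qed

lemma aff_proj_sub_sq_le:
  assumes "orthonormal_cols k U"
  shows "(norm (aff_proj k U m w - y))\<^sup>2
    \<le> 2 * (norm (w - y))\<^sup>2 + 2 * (norm (y - aff_proj k U m y))\<^sup>2"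
proof -
  have "col_proj k U (w - m) = col_proj k U (w - y) + col_proj k U (y - m)"
    using linear_add[OF linear_col_proj] by (metis diff_add_cancel add_diff_eq)
  then have "aff_proj k U m w - y = col_proj k U (w - y) - (y - aff_proj k U m y)"
    unfolding aff_proj_eq_col_proj by (simp add: algebra_simps)
  then have "(norm (aff_proj k U m w - y))\<^sup>2
      \<le> 2 * (norm (col_proj k U (w - y)))\<^sup>2 + 2 * (norm (y - aff_proj k U m y))\<^sup>2"
    using norm_diff_sq_le by metis
  moreover have "(norm (col_proj k U (w - y)))\<^sup>2 \<le> (norm (w - y))\<^sup>2"
    using norm_col_proj_le[OF assms] by (intro power_mono) auto
  ultimately show ?thesis by linarith
qed

section \<open>Existence of singular value decompositions\<close>

text \<open>For the matrix A with columns A i (i in I), gram_op I A is A A^T and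
  gram_form I A y is the squared length of A^T y.\<close>
definition gram_form :: "'i set \<Rightarrow> ('i \<Rightarrow> real^'d) \<Rightarrow> real^'d \<Rightarrow> real" where
  "gram_form I A y = (\<Sum>i\<in>I. (A i \<bullet> y)\<^sup>2)"

definition gram_op :: "'i set \<Rightarrow> ('i \<Rightarrow> real^'d) \<Rightarrow> real^'d \<Rightarrow> real^'d" where
  "gram_op I A y = (\<Sum>i\<in>I. (A i \<bullet> y) *\<^sub>R A i)"

lemma inner_gram_op: "x \<bullet> gram_op I A y = (\<Sum>i\<in>I. (A i \<bullet> x) * (A i \<bullet> y))"
  unfolding gram_op_def by (simp add: inner_sum_right inner_commute mult.commute)

lemma inner_gram_op_commute: "x \<bullet> gram_op I A y = y \<bullet> gram_op I A x"
  unfolding inner_gram_op by (simp add: mult.commute)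

lemma gram_form_eq_inner: "gram_form I A y = y \<bullet> gram_op I A y"
  unfolding gram_form_def inner_gram_op by (simp add: power2_eq_square)

lemma gram_form_nonneg: "gram_form I A y \<ge> 0"
  unfolding gram_form_def by (simp add: sum_nonneg)

lemma gram_form_scaleR: "gram_form I A (c *\<^sub>R y) = c\<^sup>2 * gram_form I A y"
  unfolding gram_form_def by (simp add: sum_distrib_left power_mult_distrib mult.commute)

lemma gram_form_add_scaleR:
  "gram_form I A (y + t *\<^sub>R w)
    = gram_form I A y + 2 * t * (w \<bullet> gram_op I A y) + t\<^sup>2 * gram_form I A w"
proof -
  have "gram_form I A (y + t *\<^sub>R w)
      = (\<Sum>i\<in>I. (A i \<bullet> y)\<^sup>2 + 2 * t * ((A i \<bullet> w) * (A i \<bullet> y)) + t\<^sup>2 * (A i \<bullet> w)\<^sup>2)"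
    unfolding gram_form_def
    by (intro sum.cong) (auto simp: inner_add_right power2_eq_square algebra_simps)
  then show ?thesis
    unfolding gram_form_def inner_gram_op by (simp add: sum.distrib sum_distrib_left)
qed

text \<open>Rayleigh-quotient argument: with w the component of A A^T ys orthogonal to ys,
  moving from ys towards ys + t w increases the normalised form by 2 t |w|^2 + O(t^2),
  so maximality forces w = 0.\<close>
lemma gram_form_maximizer_eigenvector:
  assumes eig: "\<forall>j<k. gram_op I A (u j) = \<mu> j *\<^sub>R u j"
    and ys: "norm ys = 1" "\<forall>j<k. u j \<bullet> ys = 0"
    and max: "\<And>y. norm y = 1 \<Longrightarrow> \<forall>j<k. u j \<bullet> y = 0 \<Longrightarrow> gram_form I A y \<le> gram_form I A ys"
  shows "gram_op I A ys = gram_form I A ys *\<^sub>R ys"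
proof -
  define m where "m = gram_form I A ys"
  define w where "w = gram_op I A ys - m *\<^sub>R ys"
  have ysys: "ys \<bullet> ys = 1" using ys(1) by (simp add: dot_square_norm)
  have wu: "u j \<bullet> w = 0" if "j < k" for j
    using eig ys(2) that unfolding w_def
    by (simp add: inner_diff_right inner_gram_op_commute[of "u j"] inner_commute)
  have wy: "w \<bullet> ys = 0"
    unfolding w_def m_def gram_form_eq_inner
    by (simp add: inner_diff_left inner_diff_right ysys inner_commute)
  have "2 * t * (w \<bullet> gram_op I A ys) \<le> t\<^sup>2 * (m * (w \<bullet> w) - gram_form I A w)" for t
  proof -
    define z where "z = ys + t *\<^sub>R w"
    have zz: "(norm z)\<^sup>2 = 1 + t\<^sup>2 * (w \<bullet> w)"
      unfolding z_def power2_norm_eq_inner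
      by (simp add: inner_add_left inner_add_right ysys wy inner_commute power2_eq_square)
    have pos: "0 < 1 + t\<^sup>2 * (w \<bullet> w)" by (simp add: add_pos_nonneg)
    then have nz: "norm z > 0"
      using zz by (metis norm_zero power_zero_numeral less_irrefl zero_less_norm_iff)
    have "gram_form I A ((1 / norm z) *\<^sub>R z) \<le> m"
      unfolding m_def using nz ys(2) wu
      by (intro max) (simp_all add: z_def inner_add_right)
    then have "gram_form I A z \<le> m * (1 + t\<^sup>2 * (w \<bullet> w))"
      using nz zz pos by (simp add: gram_form_scaleR power_divide divide_le_eq)
    then show ?thesis
      unfolding z_def gram_form_add_scaleR m_def by (simp add: algebra_simps)
  qed
  then have "w \<bullet> gram_op I A ys = 0" by (rule linear_le_quadratic_imp_zero)
  then have "w \<bullet> w = 0"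
    unfolding w_def m_def gram_form_eq_inner using ysys
    by (simp add: inner_diff_left inner_diff_right inner_commute)
  then show ?thesis unfolding w_def m_def by simp
qed

lemma gram_op_greedy_eigenvectors:
  fixes A :: "'i \<Rightarrow> real^'d"
  assumes "k \<le> CARD('d)"
  shows "\<exists>u \<mu>. orthonormal_cols k u \<and> (\<forall>j<k. gram_op I A (u j) = \<mu> j *\<^sub>R u j) \<and>
           (\<forall>j<k. \<forall>y. norm y = 1 \<longrightarrow> (\<forall>l<j. u l \<bullet> y = 0) \<longrightarrow> gram_form I A y \<le> \<mu> j)"
  using assms
proof (induction k)
  case 0
  show ?case by (simp add: orthonormal_cols_def)
next
  case (Suc k)
  then obtain u \<mu> where on: "orthonormal_cols k u" and eig: "\<forall>j<k. gram_op I A (u j) = \<mu> j *\<^sub>R u j"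
    and mx: "\<forall>j<k. \<forall>y. norm y = 1 \<longrightarrow> (\<forall>l<j. u l \<bullet> y = 0) \<longrightarrow> gram_form I A y \<le> \<mu> j"
    by auto
  define K where "K = {y. norm y = 1 \<and> (\<forall>j<k. u j \<bullet> y = 0)}"
  have "K = sphere 0 1 \<inter> (\<Inter>j\<in>{..<k}. {y. u j \<bullet> y = 0})" unfolding K_def by auto
  then have "compact K"
    by (simp add: compact_Int_closed closed_INT closed_hyperplane)
  moreover have "K \<noteq> {}"
  proof -
    obtain y where y: "orthonormal_cols (Suc k) (u(k := y))"
      using orthonormal_cols_extend[OF on] Suc.prems by auto
    note y' = y[unfolded orthonormal_cols_def, rule_format]
    have "y \<bullet> y = 1" using y'[of k k] by simp
    moreover have "u j \<bullet> y = 0" if "j < k" for j using y'[of j k] that by simp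
    ultimately have "y \<in> K" unfolding K_def by (simp add: norm_eq_sqrt_inner)
    then show ?thesis by blast
  qed
  moreover have "continuous_on K (gram_form I A)"
    unfolding gram_form_def by (intro continuous_intros)
  ultimately obtain ys where ys: "ys \<in> K" and ysmax: "\<forall>y\<in>K. gram_form I A y \<le> gram_form I A ys"
    using continuous_attains_sup by blast
  have eigys: "gram_op I A ys = gram_form I A ys *\<^sub>R ys"
    using ys ysmax by (intro gram_form_maximizer_eigenvector[OF eig]) (auto simp: K_def)
  define u' where "u' = u(k := ys)"
  define \<mu>' where "\<mu>' = \<mu>(k := gram_form I A ys)"
  have "orthonormal_cols (Suc k) u'"
    using on ys unfolding orthonormal_cols_def u'_def K_def
    by (auto simp: less_Suc_eq inner_commute dot_square_norm)
  moreover have "\<forall>j<Suc k. gram_op I A (u' j) = \<mu>' j *\<^sub>R u' j"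
    using eig eigys unfolding u'_def \<mu>'_def by (auto simp: less_Suc_eq)
  moreover have "\<forall>j<Suc k. \<forall>y. norm y = 1 \<longrightarrow> (\<forall>l<j. u' l \<bullet> y = 0) \<longrightarrow> gram_form I A y \<le> \<mu>' j"
    using mx ysmax unfolding u'_def \<mu>'_def K_def by (auto simp: less_Suc_eq)
  ultimately show ?case by blast
qed

lemma gram_op_eigenbasis:
  fixes A :: "'i \<Rightarrow> real^'d"
  obtains u \<mu> where "orthonormal_cols CARD('d) u"
    and "\<And>j. j < CARD('d) \<Longrightarrow> gram_op I A (u j) = \<mu> j *\<^sub>R u j"
    and "\<And>j. j < CARD('d) \<Longrightarrow> \<mu> j = gram_form I A (u j)"
    and "\<And>j l. j \<le> l \<Longrightarrow> l < CARD('d) \<Longrightarrow> \<mu> l \<le> \<mu> j"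
proof -
  obtain u \<mu> where on: "orthonormal_cols CARD('d) u"
    and eig: "\<forall>j<CARD('d). gram_op I A (u j) = \<mu> j *\<^sub>R u j"
    and mx: "\<forall>j<CARD('d). \<forall>y. norm y = 1 \<longrightarrow> (\<forall>l<j. u l \<bullet> y = 0) \<longrightarrow> gram_form I A y \<le> \<mu> j"
    using gram_op_greedy_eigenvectors[of "CARD('d)" I A] by auto
  note uu = on[unfolded orthonormal_cols_def, rule_format]
  have form: "\<mu> j = gram_form I A (u j)" if "j < CARD('d)" for j
    using eig uu[of j j] that by (simp add: gram_form_eq_inner)
  have "\<mu> l \<le> \<mu> j" if "j \<le> l" "l < CARD('d)" for j l
    using mx uu[of _ l] form[of l] that by (simp add: norm_eq_sqrt_inner)
  with on eig form show thesis by (intro that) auto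
qed

lemma gram_op_eigenbasis_rank:
  fixes A :: "'i \<Rightarrow> real^'d"
  assumes "finite I"
  obtains u \<mu> p where "orthonormal_cols CARD('d) u" "p \<le> CARD('d)"
    "\<And>j. j < CARD('d) \<Longrightarrow> gram_op I A (u j) = \<mu> j *\<^sub>R u j"
    "\<And>j l. j \<le> l \<Longrightarrow> l < CARD('d) \<Longrightarrow> \<mu> l \<le> \<mu> j"
    "\<And>j. j < CARD('d) \<Longrightarrow> 0 \<le> \<mu> j"
    "\<And>j. j < p \<Longrightarrow> 0 < \<mu> j"
    "\<And>j. p \<le> j \<Longrightarrow> j < CARD('d) \<Longrightarrow> \<mu> j = 0"
    "\<And>i j. i \<in> I \<Longrightarrow> p \<le> j \<Longrightarrow> j < CARD('d) \<Longrightarrow> A i \<bullet> u j = 0"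
proof -
  obtain u \<mu> where on: "orthonormal_cols CARD('d) u"
    and eig: "\<And>j. j < CARD('d) \<Longrightarrow> gram_op I A (u j) = \<mu> j *\<^sub>R u j"
    and form: "\<And>j. j < CARD('d) \<Longrightarrow> \<mu> j = gram_form I A (u j)"
    and mono: "\<And>j l. j \<le> l \<Longrightarrow> l < CARD('d) \<Longrightarrow> \<mu> l \<le> \<mu> j"
    using gram_op_eigenbasis[of I A] by blast
  have nonneg: "0 \<le> \<mu> j" if "j < CARD('d)" for j
    using form[OF that] gram_form_nonneg by simp
  define p where "p = (LEAST j. j = CARD('d) \<or> \<mu> j = 0)"
  have "p \<le> CARD('d)" unfolding p_def by (simp add: Least_le)
  have pos: "0 < \<mu> j" if "j < p" for j
    using not_less_Least[of j "\<lambda>j. j = CARD('d) \<or> \<mu> j = 0"] that \<open>p \<le> CARD('d)\<close> nonneg[of j]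
    unfolding p_def by fastforce
  have zero: "\<mu> j = 0" if "p \<le> j" "j < CARD('d)" for j
  proof -
    have "p = CARD('d) \<or> \<mu> p = 0" unfolding p_def by (rule LeastI[of _ "CARD('d)"]) simp
    then show ?thesis using mono[of p j] nonneg[of j] that by auto
  qed
  have "A i \<bullet> u j = 0" if "i \<in> I" "p \<le> j" "j < CARD('d)" for i j
    using form[of j] zero[of j] that \<open>finite I\<close> unfolding gram_form_def
    by (simp add: sum_nonneg_eq_0_iff)
  with on \<open>p \<le> CARD('d)\<close> eig mono nonneg pos zero show thesis by (rule that)
qed

text \<open>The normalised coordinates of the columns along the positive eigenvectors of
  the Gram operator are the right singular vectors.\<close>
lemma orthonormal_family_gram_coords:
  assumes u: "orthonormal_cols p u"
    and eig: "\<And>j. j < p \<Longrightarrow> gram_op I A (u j) = \<mu> j *\<^sub>R u j"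
    and pos: "\<And>j. j < p \<Longrightarrow> 0 < \<mu> j"
  shows "orthonormal_family I p (\<lambda>j i. (A i \<bullet> u j) / sqrt (\<mu> j))"
  unfolding orthonormal_family_def
proof (intro allI impI)
  fix j l assume "j < p" "l < p"
  have "set_inner I (\<lambda>i. (A i \<bullet> u j) / sqrt (\<mu> j)) (\<lambda>i. (A i \<bullet> u l) / sqrt (\<mu> l))
      = (u j \<bullet> gram_op I A (u l)) / (sqrt (\<mu> j) * sqrt (\<mu> l))"
    unfolding set_inner_def inner_gram_op by (simp add: sum_divide_distrib)
  also have "\<dots> = \<mu> l * (u j \<bullet> u l) / (sqrt (\<mu> j) * sqrt (\<mu> l))"
    using eig \<open>l < p\<close> by simp
  also have "\<dots> = (if j = l then 1 else 0)"
    using u[unfolded orthonormal_cols_def] \<open>j < p\<close> \<open>l < p\<close> pos[of j] pos[of l]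
    by (auto simp: real_sqrt_mult[symmetric])
  finally show "set_inner I (\<lambda>i. (A i \<bullet> u j) / sqrt (\<mu> j)) (\<lambda>i. (A i \<bullet> u l) / sqrt (\<mu> l))
      = (if j = l then 1 else 0)" .
qed

lemma is_svdI:
  fixes A :: "'i \<Rightarrow> real^'d" and I :: "'i set"
  defines "r \<equiv> min CARD('d) (card I)"
  assumes u: "orthonormal_cols r u" and v: "orthonormal_family I r v"
    and A: "\<forall>i\<in>I. A i = (\<Sum>j<r. (s j * v j i) *\<^sub>R u j)"
    and s: "\<forall>j<r. 0 \<le> s j" "\<forall>j l. j \<le> l \<longrightarrow> l < r \<longrightarrow> s l \<le> s j" "\<forall>j\<ge>r. s j = 0"
  shows "is_svd I A s"
  using u v A s
  unfolding is_svd_def Let_def r_def[symmetric] orthonormal_cols_def orthonormal_family_def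
    set_inner_def
  by (intro conjI exI[of _ u] exI[of _ v])

lemma col_proj_eq_of_perp:
  fixes u :: "nat \<Rightarrow> real^'d"
  assumes "orthonormal_cols CARD('d) u" "p \<le> CARD('d)"
    and "\<And>j. p \<le> j \<Longrightarrow> j < CARD('d) \<Longrightarrow> u j \<bullet> x = 0"
  shows "col_proj p u x = x"
proof -
  have "x = col_proj CARD('d) u x" using orthonormal_cols_complete[OF assms(1)] by simp
  also have "\<dots> = col_proj p u x"
    unfolding col_proj_def using assms(2,3) by (intro sum.mono_neutral_right) auto
  finally show ?thesis by simp
qed

lemma is_svd_exists:
  fixes A :: "'i \<Rightarrow> real^'d"
  assumes fin: "finite I"
  shows "\<exists>s. is_svd I A s"
proof (rule gram_op_eigenbasis_rank[OF fin, of A])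
  fix u \<mu> p
  assume on: "orthonormal_cols CARD('d) u" and "p \<le> CARD('d)"
    and eig: "\<And>j. j < CARD('d) \<Longrightarrow> gram_op I A (u j) = \<mu> j *\<^sub>R u j"
    and mono: "\<And>j l. j \<le> l \<Longrightarrow> l < CARD('d) \<Longrightarrow> \<mu> l \<le> \<mu> j"
    and nonneg: "\<And>j. j < CARD('d) \<Longrightarrow> 0 \<le> \<mu> j"
    and pos: "\<And>j. j < p \<Longrightarrow> 0 < \<mu> j"
    and zero: "\<And>j. p \<le> j \<Longrightarrow> j < CARD('d) \<Longrightarrow> \<mu> j = 0"
    and A_perp: "\<And>i j. i \<in> I \<Longrightarrow> p \<le> j \<Longrightarrow> j < CARD('d) \<Longrightarrow> A i \<bullet> u j = 0"
  define r where "r = min CARD('d) (card I)"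
  define v where "v j i = (A i \<bullet> u j) / sqrt (\<mu> j)" for j i
  have v: "orthonormal_family I p v"
    unfolding v_def using orthonormal_cols_mono[OF on \<open>p \<le> CARD('d)\<close>] eig pos \<open>p \<le> CARD('d)\<close>
    by (intro orthonormal_family_gram_coords) auto
  have "r \<le> CARD('d)" "r \<le> card I" unfolding r_def by simp_all
  have "p \<le> r" using orthonormal_family_card_le[OF fin v] \<open>p \<le> CARD('d)\<close> unfolding r_def by simp
  obtain v' where v': "orthonormal_family I r v'" and agree: "\<forall>j<p. v' j = v j"
    using orthonormal_family_extend_to[OF fin v \<open>p \<le> r\<close> \<open>r \<le> card I\<close>] by blast
  define s where "s j = (if j < r then sqrt (\<mu> j) else 0)" for j
  have "A i = (\<Sum>j<r. (s j * v' j i) *\<^sub>R u j)" if "i \<in> I" for i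
  proof -
    have "A i = (\<Sum>j<p. (u j \<bullet> A i) *\<^sub>R u j)"
      using col_proj_eq_of_perp[OF on \<open>p \<le> CARD('d)\<close>, of "A i"] A_perp[OF that]
      unfolding col_proj_def by (simp add: inner_commute)
    also have "\<dots> = (\<Sum>j<p. (s j * v' j i) *\<^sub>R u j)"
      using \<open>p \<le> r\<close> pos agree unfolding s_def v_def
      by (intro sum.cong refl) (simp add: inner_commute less_imp_neq[symmetric])
    also have "\<dots> = (\<Sum>j<r. (s j * v' j i) *\<^sub>R u j)"
      using \<open>p \<le> r\<close> \<open>r \<le> CARD('d)\<close> zero unfolding s_def by (intro sum.mono_neutral_left) auto
    finally show ?thesis .
  qed
  then show "\<exists>s. is_svd I A s"
    using orthonormal_cols_mono[OF on \<open>r \<le> CARD('d)\<close>] v' nonneg mono \<open>r \<le> CARD('d)\<close>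
    by (intro exI[of _ s] is_svdI[where A = A and I = I, folded r_def]) (auto simp: s_def)
qed

section \<open>Affine combinations with small weights\<close>

lemma is_svd_leading_part:
  fixes A :: "'i \<Rightarrow> real^'d"
  assumes svd: "is_svd T A s" and pos: "0 < s (k - 1)"
  obtains u v where "orthonormal_cols k u" "orthonormal_family T k v"
    "\<And>j. j < k \<Longrightarrow> (\<Sum>i\<in>T. v j i *\<^sub>R A i) = s j *\<^sub>R u j"
    "\<And>j i. j < k \<Longrightarrow> i \<in> T \<Longrightarrow> u j \<bullet> A i = s j * v j i"
    "\<And>j. j < k \<Longrightarrow> s (k - 1) \<le> s j"
proof -
  define r where "r = min CARD('d) (card T)"
  obtain u :: "nat \<Rightarrow> real^'d" and v :: "nat \<Rightarrow> 'i \<Rightarrow> real" where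
    u: "\<forall>j<r. \<forall>l<r. u j \<bullet> u l = (if j = l then 1 else 0)" and
    v: "\<forall>j<r. \<forall>l<r. (\<Sum>i\<in>T. v j i * v l i) = (if j = l then 1 else 0)" and
    recon: "\<forall>i\<in>T. A i = (\<Sum>j<r. (s j * v j i) *\<^sub>R u j)" and
    mono: "\<forall>j l. j \<le> l \<longrightarrow> l < r \<longrightarrow> s l \<le> s j" and
    zero: "\<forall>j\<ge>r. s j = 0"
    using svd unfolding is_svd_def Let_def r_def by blast
  have "k - 1 < r" using zero pos by (metis leI order.irrefl)
  then have "k \<le> r" by arith
  have ur: "orthonormal_cols r u" using u unfolding orthonormal_cols_def by blast
  have vr: "orthonormal_family T r v" using v unfolding orthonormal_family_def set_inner_def .
  have uA: "u j \<bullet> A i = s j * v j i" if "j < r" "i \<in> T" for j i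
    using recon that orthonormal_cols_inner_comb[OF ur \<open>j < r\<close>, of "\<lambda>j. s j * v j i"] by simp
  have "(\<Sum>i\<in>T. v j i *\<^sub>R A i) = s j *\<^sub>R u j" if "j < r" for j
  proof -
    have "(\<Sum>i\<in>T. v j i *\<^sub>R A i) = (\<Sum>l<r. (s l * set_inner T (v j) (v l)) *\<^sub>R u l)"
      using recon unfolding set_inner_def
      by (simp add: scaleR_sum_right scaleR_sum_left sum_distrib_left mult.left_commute
          cong: sum.cong) (rule sum.swap)
    also have "\<dots> = (\<Sum>l<r. if l = j then s j *\<^sub>R u j else 0)"
      using vr \<open>j < r\<close> unfolding orthonormal_family_def by (intro sum.cong refl) auto
    also have "\<dots> = s j *\<^sub>R u j" using \<open>j < r\<close> by simp
    finally show ?thesis .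
  qed
  moreover have "s (k - 1) \<le> s j" if "j < k" for j
    using mono \<open>k \<le> r\<close> that by simp
  ultimately show thesis
    using that[of u v] orthonormal_cols_mono[OF ur \<open>k \<le> r\<close>] vr uA \<open>k \<le> r\<close>
    unfolding orthonormal_family_def by auto
qed

text \<open>Inverting the leading singular directions: the weights are
  lam = sum_j (u_j . x / s_j) v_j, whose length is at most |x| / sigma.\<close>
lemma combination_from_singular_vectors:
  fixes A :: "'i \<Rightarrow> real^'d"
  assumes u: "orthonormal_cols k u" and v: "orthonormal_family T k v"
    and v_comb: "\<And>j. j < k \<Longrightarrow> (\<Sum>i\<in>T. v j i *\<^sub>R A i) = s j *\<^sub>R u j"
    and v_sum: "\<And>j. j < k \<Longrightarrow> (\<Sum>i\<in>T. v j i) = 0"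
    and "0 < \<sigma>" and s_ge: "\<And>j. j < k \<Longrightarrow> \<sigma> \<le> s j" and x: "col_proj k u x = x"
  obtains lam where "x = (\<Sum>i\<in>T. lam i *\<^sub>R A i)" "(\<Sum>i\<in>T. lam i) = 0"
    "(\<Sum>i\<in>T. (lam i)\<^sup>2) \<le> (norm x)\<^sup>2 / \<sigma>\<^sup>2"
proof -
  have s_pos: "0 < s j" if "j < k" for j using s_ge[OF that] \<open>0 < \<sigma>\<close> by linarith
  define c where "c j = (u j \<bullet> x) / s j" for j
  define lam where "lam i = (\<Sum>j<k. c j * v j i)" for i
  have "(\<Sum>i\<in>T. lam i *\<^sub>R A i) = (\<Sum>j<k. c j *\<^sub>R (\<Sum>i\<in>T. v j i *\<^sub>R A i))"
    unfolding lam_def by (simp add: scaleR_sum_left scaleR_sum_right sum.swap[of _ T])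
  also have "\<dots> = col_proj k u x"
    unfolding col_proj_def
  proof (intro sum.cong refl)
    fix j assume "j \<in> {..<k}"
    then show "c j *\<^sub>R (\<Sum>i\<in>T. v j i *\<^sub>R A i) = (u j \<bullet> x) *\<^sub>R u j"
      using v_comb[of j] s_pos[of j] unfolding c_def by simp
  qed
  finally have x_eq: "x = (\<Sum>i\<in>T. lam i *\<^sub>R A i)" using x by simp
  have "(\<Sum>i\<in>T. lam i) = (\<Sum>j<k. c j * (\<Sum>i\<in>T. v j i))"
    unfolding lam_def sum_distrib_left by (rule sum.swap)
  then have lam_sum: "(\<Sum>i\<in>T. lam i) = 0" using v_sum by simp
  have "(\<Sum>i\<in>T. (lam i)\<^sup>2) = (\<Sum>j<k. (c j)\<^sup>2)"
    unfolding lam_def by (rule sum_sq_orthonormal_comb[OF v])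
  also have "\<dots> \<le> (\<Sum>j<k. (u j \<bullet> x)\<^sup>2 / \<sigma>\<^sup>2)"
  proof (intro sum_mono)
    fix j assume "j \<in> {..<k}"
    then have "\<sigma>\<^sup>2 \<le> (s j)\<^sup>2" "0 < \<sigma>\<^sup>2"
      using s_ge[of j] \<open>0 < \<sigma>\<close> by (simp_all add: power_mono)
    then show "(c j)\<^sup>2 \<le> (u j \<bullet> x)\<^sup>2 / \<sigma>\<^sup>2"
      unfolding c_def power_divide by (intro divide_left_mono mult_pos_pos) auto
  qed
  also have "\<dots> = (norm x)\<^sup>2 / \<sigma>\<^sup>2"
    using norm_col_proj_sq[OF u, of x] x by (simp add: sum_divide_distrib)
  finally show thesis using x_eq lam_sum that by blast
qed

lemma col_span_centered_combination:
  fixes A :: "'i \<Rightarrow> real^'d"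
  assumes svd: "is_svd T A s" and "0 < \<sigma>" and \<sigma>: "\<sigma> \<le> s (k - 1)"
    and U: "orthonormal_cols k U" and A_span: "\<forall>i\<in>T. col_proj k U (A i) = A i"
    and centered: "(\<Sum>i\<in>T. A i) = 0" and x: "col_proj k U x = x"
  obtains lam where "x = (\<Sum>i\<in>T. lam i *\<^sub>R A i)" "(\<Sum>i\<in>T. lam i) = 0"
    "(\<Sum>i\<in>T. (lam i)\<^sup>2) \<le> (norm x)\<^sup>2 / \<sigma>\<^sup>2"
proof -
  have "0 < s (k - 1)" using \<sigma> \<open>0 < \<sigma>\<close> by linarith
  obtain u v where u: "orthonormal_cols k u" and v: "orthonormal_family T k v"
    and v_comb: "\<And>j. j < k \<Longrightarrow> (\<Sum>i\<in>T. v j i *\<^sub>R A i) = s j *\<^sub>R u j"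
    and uA: "\<And>j i. j < k \<Longrightarrow> i \<in> T \<Longrightarrow> u j \<bullet> A i = s j * v j i"
    and mono: "\<And>j. j < k \<Longrightarrow> s (k - 1) \<le> s j"
    using is_svd_leading_part[OF svd \<open>0 < s (k - 1)\<close>] by blast
  have s_ge: "\<sigma> \<le> s j" if "j < k" for j using mono[OF that] \<sigma> by simp
  then have s_pos: "0 < s j" if "j < k" for j using \<open>0 < \<sigma>\<close> that by (meson order.strict_trans2)
  have S: "subspace {y. col_proj k U y = y}" by (rule subspace_col_proj_fixed)
  have "u j \<in> {y. col_proj k U y = y}" if "j < k" for j
  proof -
    have "u j = (1 / s j) *\<^sub>R (\<Sum>i\<in>T. v j i *\<^sub>R A i)"
      using v_comb[OF that] s_pos[OF that] by simp
    also have "\<dots> \<in> {y. col_proj k U y = y}"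
      by (intro subspace_scale[OF S] subspace_sum[OF S]) (simp add: A_span)
    finally show ?thesis .
  qed
  then have "col_proj k u x = x" by (intro orthonormal_cols_col_span_eq[OF U u _ x]) simp
  moreover have "(\<Sum>i\<in>T. v j i) = 0" if "j < k" for j
  proof -
    have "s j * (\<Sum>i\<in>T. v j i) = u j \<bullet> (\<Sum>i\<in>T. A i)"
      using uA that by (simp add: sum_distrib_left inner_sum_right)
    then show ?thesis using centered s_pos[OF that] by simp
  qed
  ultimately show thesis
    using combination_from_singular_vectors[OF u v v_comb _ \<open>0 < \<sigma>\<close> s_ge] that by blast
qed

lemma sum_sq_uniform_plus_centered:
  assumes "finite T" "T \<noteq> {}" "(\<Sum>i\<in>T. lam i) = 0"
  shows "(\<Sum>i\<in>T. (1 / real (card T) + lam i)\<^sup>2) = 1 / real (card T) + (\<Sum>i\<in>T. (lam i)\<^sup>2)"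
proof -
  define N where "N = real (card T)"
  have "N > 0" unfolding N_def using assms(1,2) by (simp add: card_gt_0_iff)
  have "(\<Sum>i\<in>T. (1 / N + lam i)\<^sup>2) = (\<Sum>i\<in>T. 1 / N\<^sup>2 + (2 / N) * lam i + (lam i)\<^sup>2)"
    by (intro sum.cong refl) (simp add: power2_eq_square algebra_simps)
  also have "\<dots> = N / N\<^sup>2 + (2 / N) * (\<Sum>i\<in>T. lam i) + (\<Sum>i\<in>T. (lam i)\<^sup>2)"
    by (simp add: sum.distrib sum_distrib_left N_def)
  finally show ?thesis using assms(3) \<open>N > 0\<close> unfolding N_def[symmetric]
    by (simp add: power2_eq_square)
qed

text \<open>The weights are the uniform ones plus the centred correction provided by
  col_span_centered_combination.\<close>
lemma affine_combination_small_weights: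
  fixes e :: "'i \<Rightarrow> real^'d" and T :: "'i set"
  defines "\<mu> \<equiv> (1 / real (card T)) *\<^sub>R (\<Sum>i\<in>T. e i)"
  assumes T: "finite T" "T \<noteq> {}" and U: "orthonormal_cols k U"
    and e: "\<forall>i\<in>T. e i \<in> aff_sub k U m" and y: "y \<in> aff_sub k U m"
    and "0 < \<sigma>" and \<sigma>: "\<sigma> \<le> sing_val k T (\<lambda>i. e i - \<mu>)"
  obtains a where "y = (\<Sum>i\<in>T. a i *\<^sub>R e i)" "(\<Sum>i\<in>T. a i) = 1"
    "(\<Sum>i\<in>T. (a i)\<^sup>2) \<le> 1 / real (card T) + (norm (y - \<mu>))\<^sup>2 / \<sigma>\<^sup>2"
proof -
  have "\<mu> \<in> aff_sub k U m" unfolding \<mu>_def by (rule mean_in_aff_sub[OF U T e])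
  then have A_span: "\<forall>i\<in>T. col_proj k U (e i - \<mu>) = e i - \<mu>"
    and x_span: "col_proj k U (y - \<mu>) = y - \<mu>"
    using aff_sub_diff_col_proj[OF U] e y by auto
  have centered: "(\<Sum>i\<in>T. e i - \<mu>) = 0"
    unfolding \<mu>_def using T by (simp add: sum_subtractf sum_constant_scaleR del: sum_constant)
  have svd: "is_svd T (\<lambda>i. e i - \<mu>) (SOME s. is_svd T (\<lambda>i. e i - \<mu>) s)"
    using is_svd_exists[OF \<open>finite T\<close>] by (rule someI_ex)
  obtain lam where lam: "y - \<mu> = (\<Sum>i\<in>T. lam i *\<^sub>R (e i - \<mu>))"
    "(\<Sum>i\<in>T. lam i) = 0" "(\<Sum>i\<in>T. (lam i)\<^sup>2) \<le> (norm (y - \<mu>))\<^sup>2 / \<sigma>\<^sup>2"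
    using col_span_centered_combination[OF svd \<open>0 < \<sigma>\<close>
        \<sigma>[unfolded sing_val_def] U A_span centered x_span] by blast
  define a where "a i = 1 / real (card T) + lam i" for i
  have "(\<Sum>i\<in>T. a i *\<^sub>R e i) = \<mu> + (\<Sum>i\<in>T. lam i *\<^sub>R e i)"
    unfolding a_def \<mu>_def by (simp add: scaleR_add_left sum.distrib scaleR_sum_right)
  also have "(\<Sum>i\<in>T. lam i *\<^sub>R e i) = y - \<mu>"
    using lam(1,2) by (simp add: scaleR_diff_right sum_subtractf scaleR_sum_left[symmetric])
  finally have "y = (\<Sum>i\<in>T. a i *\<^sub>R e i)" by simp
  moreover have "(\<Sum>i\<in>T. a i) = 1" unfolding a_def using lam(2) T by (simp add: sum.distrib)
  moreover have "(\<Sum>i\<in>T. (a i)\<^sup>2) = 1 / real (card T) + (\<Sum>i\<in>T. (lam i)\<^sup>2)"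
    unfolding a_def by (rule sum_sq_uniform_plus_centered[OF T lam(2)])
  ultimately show thesis using that lam(3) by simp
qed

lemma aff_residual_le_of_spread_points:
  fixes e :: "'i \<Rightarrow> real^'d" and T :: "'i set"
  defines "\<mu> \<equiv> (1 / real (card T)) *\<^sub>R (\<Sum>i\<in>T. e i)"
  assumes T: "finite T" "T \<noteq> {}" and U': "orthonormal_cols k' U'"
    and e: "\<forall>i\<in>T. e i \<in> aff_sub k' U' m'" and y: "y \<in> aff_sub k' U' m'"
    and \<sigma>: "0 < \<sigma>" "\<sigma> \<le> sing_val k' T (\<lambda>i. e i - \<mu>)" and y_\<mu>: "norm (y - \<mu>) \<le> r"
  shows "(norm (y - aff_proj k U m y))\<^sup>2
    \<le> (1 / real (card T) + r\<^sup>2 / \<sigma>\<^sup>2) * (\<Sum>i\<in>T. (norm (e i - aff_proj k U m (e i)))\<^sup>2)"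
proof -
  obtain a where a: "y = (\<Sum>i\<in>T. a i *\<^sub>R e i)" "(\<Sum>i\<in>T. a i) = 1"
    "(\<Sum>i\<in>T. (a i)\<^sup>2) \<le> 1 / real (card T) + (norm (y - \<mu>))\<^sup>2 / \<sigma>\<^sup>2"
    using affine_combination_small_weights[OF T U' e y \<sigma>[unfolded \<mu>_def]] unfolding \<mu>_def by blast
  have "(norm (y - \<mu>))\<^sup>2 / \<sigma>\<^sup>2 \<le> r\<^sup>2 / \<sigma>\<^sup>2"
    using y_\<mu> by (intro divide_right_mono power_mono) auto
  with a(3) have weights: "(\<Sum>i\<in>T. (a i)\<^sup>2) \<le> 1 / real (card T) + r\<^sup>2 / \<sigma>\<^sup>2" by linarith
  have "(norm (y - aff_proj k U m y))\<^sup>2 = (norm (\<Sum>i\<in>T. a i *\<^sub>R (e i - aff_proj k U m (e i))))\<^sup>2"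
    unfolding a(1) aff_residual_affine_comb[OF a(2)] ..
  also have "\<dots> \<le> (\<Sum>i\<in>T. (a i)\<^sup>2) * (\<Sum>i\<in>T. (norm (e i - aff_proj k U m (e i)))\<^sup>2)"
    by (rule norm_sum_scaleR_sq_le)
  also have "\<dots> \<le> (1 / real (card T) + r\<^sup>2 / \<sigma>\<^sup>2) * (\<Sum>i\<in>T. (norm (e i - aff_proj k U m (e i)))\<^sup>2)"
    using weights by (intro mult_right_mono sum_nonneg) auto
  finally show ?thesis .
qed

lemma trimmed_loss_attained:
  obtains S where "S \<subseteq> {1..n}" "card S = n - f"
    "trimmed_loss n f g k U m = (\<Sum>i\<in>S. (norm (g i - aff_proj k U m (g i)))\<^sup>2)"
proof -
  let ?loss = "\<lambda>S. \<Sum>i\<in>S. (norm (g i - aff_proj k U m (g i)))\<^sup>2"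
  let ?Ss = "{S. S \<subseteq> {1..n} \<and> card S = n - f}"
  have "{1..n - f} \<in> ?Ss" by simp
  then have "?Ss \<noteq> {}" by blast
  then have "Min (?loss ` ?Ss) \<in> ?loss ` ?Ss" by (intro Min_in) auto
  moreover have "trimmed_loss n f g k U m = Min (?loss ` ?Ss)"
    unfolding trimmed_loss_def setcompr_eq_image ..
  ultimately show thesis using that by auto
qed

lemma trimmed_loss_nonneg: "trimmed_loss n f g k U m \<ge> 0"
  by (rule trimmed_loss_attained[of n f g k U m]) (simp add: sum_nonneg)

lemma honest_subset_of_kept:
  assumes S: "S \<subseteq> {1..n}" "card S = n - f"
    and H: "H \<subseteq> {1..n}" "card ({1..n} - H) \<le> f"
  obtains T where "T \<subseteq> S \<inter> H" "card T = n - 2 * f"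
proof -
  have "S \<subseteq> (S \<inter> H) \<union> ({1..n} - H)" using S(1) by blast
  then have "card S \<le> card (S \<inter> H) + card ({1..n} - H)"
    by (meson card_Un_le card_mono finite_Un finite_Diff finite_atLeastAtMost finite_Int
        finite_subset S(1) order_trans)
  then have "n - 2 * f \<le> card (S \<inter> H)" using S(2) H(2) by linarith
  then show thesis using obtain_subset_with_card_n that by metis
qed

lemma honest_residuals_le:
  assumes H: "H \<subseteq> {1..n}" "card ({1..n} - H) \<le> f" and U: "orthonormal_cols k U"
  shows "\<exists>T\<subseteq>H. card T = n - 2 * f \<and>
    (\<Sum>i\<in>T. (norm (Eg i - aff_proj k U m (Eg i)))\<^sup>2)
      \<le> 2 * (trimmed_loss n f g k U m + (\<Sum>i\<in>H. (norm (g i - Eg i))\<^sup>2))"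
proof -
  obtain S where S: "S \<subseteq> {1..n}" "card S = n - f"
    and loss: "trimmed_loss n f g k U m = (\<Sum>i\<in>S. (norm (g i - aff_proj k U m (g i)))\<^sup>2)"
    by (rule trimmed_loss_attained)
  obtain T where T: "T \<subseteq> S \<inter> H" "card T = n - 2 * f"
    using honest_subset_of_kept[OF S H] by blast
  have "finite H" using H(1) by (meson finite_atLeastAtMost finite_subset)
  have "(\<Sum>i\<in>T. (norm (Eg i - aff_proj k U m (Eg i)))\<^sup>2)
      \<le> (\<Sum>i\<in>T. 2 * (norm (g i - aff_proj k U m (g i)))\<^sup>2 + 2 * (norm (g i - Eg i))\<^sup>2)"
    by (intro sum_mono aff_residual_sq_le[OF U])
  also have "\<dots> \<le> 2 * (\<Sum>i\<in>S. (norm (g i - aff_proj k U m (g i)))\<^sup>2)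
      + 2 * (\<Sum>i\<in>H. (norm (g i - Eg i))\<^sup>2)"
    using T(1) S(1) \<open>finite H\<close>
    by (simp add: sum.distrib sum_distrib_left[symmetric] finite_subset add_mono sum_mono2)
  finally show ?thesis using T unfolding loss by auto
qed

theorem server_projection_error_bound:
  fixes Eg Egam :: "nat \<Rightarrow> real^'d"
  assumes n_ge: "n \<ge> 2 * f + 1"
    and H_sub: "H \<subseteq> {1..n}" and B_card: "card ({1..n} - H) \<le> f"
    and A_sub_ortho: "orthonormal_cols (c - 1) Ustar"
    and A_sub: "\<forall>i\<in>H. Eg i \<in> aff_sub (c - 1) Ustar mstar"
    and A_outer: "\<forall>i\<in>H. norm (Eg i - (1 / real (card H)) *\<^sub>R (\<Sum>i'\<in>H. Eg i')) \<le> \<delta>"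
    and sigma_pos: "\<sigma> > 0"
    and A_sing: "\<forall>S. S \<subseteq> H \<and> card S = n - 2 * f \<longrightarrow>
        sing_val (c - 1) S (\<lambda>s. Eg s - (1 / real (n - 2 * f)) *\<^sub>R (\<Sum>s'\<in>S. Eg s')) \<ge> \<sigma>"
    and server_in: "\<forall>z\<in>{1..c}. Egam z \<in> aff_sub (c - 1) Ustar mstar"
    and server_outer: "\<forall>z\<in>{1..c}. norm (Egam z - (1 / real (card H)) *\<^sub>R (\<Sum>i\<in>H. Eg i)) \<le> \<delta>s"
    and U: "orthonormal_cols k U"
  shows "(spec_norm {1..c} (\<lambda>z. aff_proj k U m (gam z) - Egam z))\<^sup>2
    \<le> 2 * (\<Sum>z=1..c. (norm (gam z - Egam z))\<^sup>2)
      + 4 * real c * (1 / real (n - 2 * f) + (\<delta> + \<delta>s)\<^sup>2 / \<sigma>\<^sup>2)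
        * (trimmed_loss n f g k U m + (\<Sum>i\<in>H. (norm (g i - Eg i))\<^sup>2))"
proof -
  define K where "K = 1 / real (n - 2 * f) + (\<delta> + \<delta>s)\<^sup>2 / \<sigma>\<^sup>2"
  define Q where "Q = trimmed_loss n f g k U m + (\<Sum>i\<in>H. (norm (g i - Eg i))\<^sup>2)"
  obtain T where "T \<subseteq> H" and card_T: "card T = n - 2 * f"
    and res_T: "(\<Sum>i\<in>T. (norm (Eg i - aff_proj k U m (Eg i)))\<^sup>2) \<le> 2 * Q"
    using honest_residuals_le[OF H_sub B_card U, of Eg m g] unfolding Q_def by blast
  have "finite T" using \<open>T \<subseteq> H\<close> H_sub by (meson finite_atLeastAtMost finite_subset)
  have "T \<noteq> {}" using card_T n_ge by auto
  define \<mu> where "\<mu> = (1 / real (card T)) *\<^sub>R (\<Sum>i\<in>T. Eg i)"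
  let ?E\<mu> = "(1 / real (card H)) *\<^sub>R (\<Sum>i\<in>H. Eg i)"
  have "norm (\<mu> - ?E\<mu>) \<le> \<delta>"
    unfolding \<mu>_def using A_outer \<open>T \<subseteq> H\<close>
    by (intro norm_mean_sub_le[OF \<open>finite T\<close> \<open>T \<noteq> {}\<close>]) auto
  then have dist: "norm (Egam z - \<mu>) \<le> \<delta> + \<delta>s" if "z \<in> {1..c}" for z
    using server_outer[rule_format, OF that] norm_triangle_ineq4[of "Egam z - ?E\<mu>" "\<mu> - ?E\<mu>"]
    by simp
  have spread: "\<sigma> \<le> sing_val (c - 1) T (\<lambda>i. Eg i - \<mu>)"
    using A_sing \<open>T \<subseteq> H\<close> card_T unfolding \<mu>_def by simp
  have res_Egam: "(norm (Egam z - aff_proj k U m (Egam z)))\<^sup>2 \<le> K * (2 * Q)"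
    if z: "z \<in> {1..c}" for z
  proof -
    have "(norm (Egam z - aff_proj k U m (Egam z)))\<^sup>2
        \<le> (1 / real (card T) + (\<delta> + \<delta>s)\<^sup>2 / \<sigma>\<^sup>2) * (\<Sum>i\<in>T. (norm (Eg i - aff_proj k U m (Eg i)))\<^sup>2)"
      using A_sub \<open>T \<subseteq> H\<close>
      by (intro aff_residual_le_of_spread_points[OF \<open>finite T\<close> \<open>T \<noteq> {}\<close> A_sub_ortho _
            server_in[rule_format, OF z] sigma_pos spread[unfolded \<mu>_def]
            dist[OF z, unfolded \<mu>_def]])
        auto
    also have "\<dots> \<le> K * (2 * Q)"
      unfolding K_def card_T using res_T by (intro mult_left_mono) auto
    finally show ?thesis .
  qed
  have "(spec_norm {1..c} (\<lambda>z. aff_proj k U m (gam z) - Egam z))\<^sup>2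
      \<le> (\<Sum>z\<in>{1..c}. (norm (aff_proj k U m (gam z) - Egam z))\<^sup>2)"
    by (rule spec_norm_sq_le_sum_norm_sq) simp
  also have "\<dots> \<le> (\<Sum>z\<in>{1..c}. 2 * (norm (gam z - Egam z))\<^sup>2 + 4 * K * Q)"
  proof (rule sum_mono)
    fix z assume "z \<in> {1..c}"
    then show "(norm (aff_proj k U m (gam z) - Egam z))\<^sup>2
        \<le> 2 * (norm (gam z - Egam z))\<^sup>2 + 4 * K * Q"
      using aff_proj_sub_sq_le[OF U, of m "gam z" "Egam z"] res_Egam by fastforce
  qed
  also have "\<dots> = 2 * (\<Sum>z=1..c. (norm (gam z - Egam z))\<^sup>2) + 4 * real c * K * Q"
    by (simp add: sum.distrib sum_distrib_left)
  finally show ?thesis unfolding K_def Q_def by simp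
qed

lemma borel_measurable_norm_diff_sq:
  fixes X :: "'w \<Rightarrow> 'a::euclidean_space"
  assumes [measurable]: "X \<in> borel_measurable M"
  shows "(\<lambda>\<omega>. (norm (X \<omega> - c))\<^sup>2) \<in> borel_measurable M"
  by measurable

lemma nn_integral_le_from_pointwise_bound:
  fixes X L :: "'w \<Rightarrow> real" and A :: "'z \<Rightarrow> 'w \<Rightarrow> real" and B :: "'i \<Rightarrow> 'w \<Rightarrow> real"
  assumes "finite Z" "finite I" "0 \<le> C" "0 \<le> K" "0 \<le> a" "0 \<le> b"
    and bound: "\<And>\<omega>. \<omega> \<in> space M \<Longrightarrow> X \<omega> \<le> C * (\<Sum>z\<in>Z. A z \<omega>) + K * (L \<omega> + (\<Sum>i\<in>I. B i \<omega>))"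
    and nonneg: "\<And>z \<omega>. 0 \<le> A z \<omega>" "\<And>i \<omega>. 0 \<le> B i \<omega>" "\<And>\<omega>. 0 \<le> L \<omega>"
    and meas: "\<And>z. z \<in> Z \<Longrightarrow> A z \<in> borel_measurable M"
      "\<And>i. i \<in> I \<Longrightarrow> B i \<in> borel_measurable M" "L \<in> borel_measurable M"
    and A_int: "\<And>z. z \<in> Z \<Longrightarrow> (\<integral>\<^sup>+\<omega>. ennreal (A z \<omega>) \<partial>M) \<le> ennreal a"
    and B_int: "\<And>i. i \<in> I \<Longrightarrow> (\<integral>\<^sup>+\<omega>. ennreal (B i \<omega>) \<partial>M) \<le> ennreal b"
  shows "(\<integral>\<^sup>+\<omega>. ennreal (X \<omega>) \<partial>M)
    \<le> ennreal (C * real (card Z) * a)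
      + ennreal K * ((\<integral>\<^sup>+\<omega>. ennreal (L \<omega>) \<partial>M) + ennreal (real (card I) * b))"
proof -
  have mA: "(\<lambda>\<omega>. \<Sum>z\<in>Z. ennreal (A z \<omega>)) \<in> borel_measurable M"
    using meas(1) by measurable
  have mB: "(\<lambda>\<omega>. \<Sum>i\<in>I. ennreal (B i \<omega>)) \<in> borel_measurable M"
    using meas(2) by measurable
  have mL: "(\<lambda>\<omega>. ennreal (L \<omega>)) \<in> borel_measurable M" using meas(3) by measurable
  have "(\<integral>\<^sup>+\<omega>. ennreal (X \<omega>) \<partial>M)
      \<le> (\<integral>\<^sup>+\<omega>. ennreal C * (\<Sum>z\<in>Z. ennreal (A z \<omega>))
                + ennreal K * (ennreal (L \<omega>) + (\<Sum>i\<in>I. ennreal (B i \<omega>))) \<partial>M)"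
  proof (rule nn_integral_mono)
    fix \<omega> assume "\<omega> \<in> space M"
    then have "ennreal (X \<omega>) \<le> ennreal (C * (\<Sum>z\<in>Z. A z \<omega>) + K * (L \<omega> + (\<Sum>i\<in>I. B i \<omega>)))"
      by (intro ennreal_leI bound)
    also have "\<dots> = ennreal C * (\<Sum>z\<in>Z. ennreal (A z \<omega>))
        + ennreal K * (ennreal (L \<omega>) + (\<Sum>i\<in>I. ennreal (B i \<omega>)))"
      using assms(3,4) nonneg
      by (simp add: ennreal_plus ennreal_mult sum_nonneg add_nonneg_nonneg mult_nonneg_nonneg)
    finally show "ennreal (X \<omega>) \<le> \<dots>" .
  qed
  also have "\<dots> = ennreal C * (\<Sum>z\<in>Z. \<integral>\<^sup>+\<omega>. ennreal (A z \<omega>) \<partial>M)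
      + ennreal K * ((\<integral>\<^sup>+\<omega>. ennreal (L \<omega>) \<partial>M) + (\<Sum>i\<in>I. \<integral>\<^sup>+\<omega>. ennreal (B i \<omega>) \<partial>M))"
    using mA mB mL meas
    by (simp add: nn_integral_add nn_integral_cmult nn_integral_sum)
  also have "\<dots> \<le> ennreal C * (\<Sum>z\<in>Z. ennreal a)
      + ennreal K * ((\<integral>\<^sup>+\<omega>. ennreal (L \<omega>) \<partial>M) + (\<Sum>i\<in>I. ennreal b))"
    using A_int B_int by (intro add_mono mult_left_mono sum_mono order.refl) auto
  also have "\<dots> = ennreal (C * real (card Z) * a)
      + ennreal K * ((\<integral>\<^sup>+\<omega>. ennreal (L \<omega>) \<partial>M) + ennreal (real (card I) * b))"
    using assms(3,5,6) by (simp add: ennreal_mult ennreal_of_nat_eq_real_of_nat mult.assoc)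
  finally show ?thesis .
qed

theorem mainTheorem10:
  fixes n f c :: nat
    and H :: "nat set"
    and Eg :: "nat \<Rightarrow> real^'d"
    and Egam :: "nat \<Rightarrow> real^'d"
    and Ustar :: "nat \<Rightarrow> real^'d" and mstar :: "real^'d"
    and \<delta> \<delta>s \<sigma> :: real
  assumes f_pos: "f \<ge> 1" and n_pos: "n \<ge> 1"
    and c_ge: "c \<ge> 2" and d_ge: "CARD('d) \<ge> c"
    and n_ge: "n \<ge> 2 * f + 1"
    and H_sub: "H \<subseteq> {1..n}" and B_card: "card ({1..n} - H) \<le> f"
    and A_sub_ortho: "orthonormal_cols (c - 1) Ustar"
    and A_sub: "\<forall>i\<in>H. Eg i \<in> aff_sub (c - 1) Ustar mstar"
    and A_outer: "\<forall>i\<in>H. norm (Eg i - (1 / real (card H)) *\<^sub>R (\<Sum>i'\<in>H. Eg i')) \<le> \<delta>"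
    and sigma_pos: "\<sigma> > 0"
    and A_sing: "\<forall>S. S \<subseteq> H \<and> card S = n - 2 * f \<longrightarrow>
        sing_val (c - 1) S
          (\<lambda>s. Eg s - (1 / real (n - 2 * f)) *\<^sub>R (\<Sum>s'\<in>S. Eg s')) \<ge> \<sigma>"
    and server_in: "\<forall>z\<in>{1..c}. Egam z \<in> aff_sub (c - 1) Ustar mstar"
    and server_outer: "\<forall>z\<in>{1..c}.
        norm (Egam z - (1 / real (card H)) *\<^sub>R (\<Sum>i\<in>H. Eg i)) \<le> \<delta>s"
  shows
    "(\<forall>(g :: nat \<Rightarrow> real^'d) (gam :: nat \<Rightarrow> real^'d) (k :: nat) (U :: nat \<Rightarrow> real^'d) m.
        orthonormal_cols k U \<longrightarrow>
        (spec_norm {1..c} (\<lambda>z. aff_proj k U m (gam z) - Egam z))\<^sup>2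
          \<le> 2 * (\<Sum>z=1..c. (norm (gam z - Egam z))\<^sup>2)
            + 4 * real c * (1 / real (n - 2 * f) + (\<delta> + \<delta>s)\<^sup>2 / \<sigma>\<^sup>2)
              * (trimmed_loss n f g k U m + (\<Sum>i\<in>H. (norm (g i - Eg i))\<^sup>2)))
   \<and>
    (\<forall>(M :: 'w measure) (g :: 'w \<Rightarrow> nat \<Rightarrow> real^'d) (gam :: 'w \<Rightarrow> nat \<Rightarrow> real^'d)
       (k :: nat) (U :: 'w \<Rightarrow> nat \<Rightarrow> real^'d) (m :: 'w \<Rightarrow> real^'d) (\<epsilon> :: real) (\<epsilon>s :: real).
        prob_space M \<longrightarrow>
        (\<forall>\<omega>\<in>space M. orthonormal_cols k (U \<omega>)) \<longrightarrow>
        (\<forall>i\<in>H. (\<lambda>\<omega>. g \<omega> i) \<in> borel_measurable M) \<longrightarrow>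
        (\<forall>z\<in>{1..c}. (\<lambda>\<omega>. gam \<omega> z) \<in> borel_measurable M) \<longrightarrow>
        (\<lambda>\<omega>. trimmed_loss n f (g \<omega>) k (U \<omega>) (m \<omega>)) \<in> borel_measurable M \<longrightarrow>
        (\<forall>i\<in>H. (\<integral>\<^sup>+\<omega>. ennreal ((norm (g \<omega> i - Eg i))\<^sup>2) \<partial>M) \<le> ennreal (\<epsilon>\<^sup>2)) \<longrightarrow>
        (\<forall>z\<in>{1..c}. (\<integral>\<^sup>+\<omega>. ennreal ((norm (gam \<omega> z - Egam z))\<^sup>2) \<partial>M) \<le> ennreal (\<epsilon>s\<^sup>2)) \<longrightarrow>
        (\<integral>\<^sup>+\<omega>. ennreal ((spec_norm {1..c} (\<lambda>z. aff_proj k (U \<omega>) (m \<omega>) (gam \<omega> z) - Egam z))\<^sup>2) \<partial>M)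
          \<le> ennreal (2 * real c * \<epsilon>s\<^sup>2)
            + ennreal (4 * real c * (1 / real (n - 2 * f) + (\<delta> + \<delta>s)\<^sup>2 / \<sigma>\<^sup>2))
              * ((\<integral>\<^sup>+\<omega>. ennreal (trimmed_loss n f (g \<omega>) k (U \<omega>) (m \<omega>)) \<partial>M)
                 + ennreal (real (card H) * \<epsilon>\<^sup>2)))"
proof -
  note bound = server_projection_error_bound[OF n_ge H_sub B_card A_sub_ortho A_sub A_outer
      sigma_pos A_sing server_in server_outer]
  show ?thesis
  proof (intro conjI allI impI, goal_cases)
    case (1 g gam k U m)
    then show ?case by (rule bound)
  next
    case (2 M g gam k U m \<epsilon> \<epsilon>s)
    have "finite H" using H_sub by (meson finite_atLeastAtMost finite_subset)
    from nn_integral_le_from_pointwise_bound[OF finite_atLeastAtMost[of 1 c] this, of 2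
        "4 * real c * (1 / real (n - 2 * f) + (\<delta> + \<delta>s)\<^sup>2 / \<sigma>\<^sup>2)" "\<epsilon>s\<^sup>2" "\<epsilon>\<^sup>2" M
        "\<lambda>\<omega>. (spec_norm {1..c} (\<lambda>z. aff_proj k (U \<omega>) (m \<omega>) (gam \<omega> z) - Egam z))\<^sup>2"
        "\<lambda>z \<omega>. (norm (gam \<omega> z - Egam z))\<^sup>2" "\<lambda>\<omega>. trimmed_loss n f (g \<omega>) k (U \<omega>) (m \<omega>)"
        "\<lambda>i \<omega>. (norm (g \<omega> i - Eg i))\<^sup>2"]
    show ?case using bound 2 by (simp add: trimmed_loss_nonneg borel_measurable_norm_diff_sq)
  qed
qed

end
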